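(* Let $n\ge 2$ and let $A\subset S^n=\{x\in\mathbb R^{n+1}:\|x\|=1\}$ be a closed subset with $0<\mathrm{diam}(A)\le 1$. Then there exist distinct points $a_0,a_1\in A$ and a unit vector $b\in\mathbb R^{n+1}$ such that $\langle b,a_0\rangle=0=\max_{a\in A}\langle b,a\rangle$ and $\langle b,a_1\rangle>-\frac12\|a_1-a_0\|$.
   Context: $\langle\cdot,\cdot\rangle$ is the standard inner product and $\|\cdot\|$ the Euclidean norm on $\mathbb R^{n+1}$. *)

theory Defs
  imports "HOL-Analysis.Analysis"
begin

end

theory Submission
  imports Defs
begin

text \<open>
  Points of \<open>A\<close> pairwise have inner product at least \<open>1/2\<close>, so \<open>A\<close> lies in an open hemisphere
  and admits a supporting hyperplane through the origin touching \<open>A\<close> at some \<open>a\<^sub>0\<close>.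
  Among the unit normals \<open>b\<close> of such hyperplanes through \<open>a\<^sub>0\<close>, take one maximising \<open>b \<bullet> a\<close>
  for a fixed \<open>a \<in> A - {a\<^sub>0}\<close>. If \<open>b\<close> failed the claim at every \<open>a\<^sub>1\<close>, then tilting \<open>b\<close> by half a
  unit vector \<open>p \<perp> a\<^sub>0, b\<close> with \<open>p \<bullet> a \<ge> 0\<close> would give, after normalisation, another supporting
  normal with a larger value at \<open>a\<close>.
\<close>

definition supporting_normals :: "'a::real_inner set \<Rightarrow> 'a \<Rightarrow> 'a set" where
  "supporting_normals A a0 = {b. norm b = 1 \<and> b \<bullet> a0 = 0 \<and> (\<forall>a\<in>A. b \<bullet> a \<le> 0)}"

lemma compact_supporting_normals:
  fixes A :: "'a::euclidean_space set"
  shows "compact (supporting_normals A a0)"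
proof -
  have "supporting_normals A a0 =
      sphere 0 1 \<inter> {b. a0 \<bullet> b = 0} \<inter> (\<Inter>a\<in>A. {b. a \<bullet> b \<le> 0})"
    by (auto simp: supporting_normals_def inner_commute)
  then have "closed (supporting_normals A a0)"
    by (auto intro!: closed_Int closed_INT closed_halfspace_le closed_hyperplane
        simp del: inner_commute)
  moreover have "bounded (supporting_normals A a0)"
    by (auto simp: supporting_normals_def bounded_iff)
  ultimately show ?thesis
    by (simp add: compact_eq_bounded_closed)
qed

lemma inner_ge_half_if_dist_le_1:
  fixes x y :: "'a::real_inner"
  assumes "norm x = 1" "norm y = 1" "dist x y \<le> 1"
  shows "x \<bullet> y \<ge> 1/2"
proof -
  have "(norm (x - y))\<^sup>2 = x \<bullet> x + y \<bullet> y - 2 * (x \<bullet> y)"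
    by (simp add: power2_norm_eq_inner inner_diff inner_commute)
  moreover have "(norm (x - y))\<^sup>2 \<le> 1"
    using assms(3) by (simp add: dist_norm power_le_one)
  ultimately show ?thesis
    using assms(1,2) by (simp add: norm_eq_1)
qed

lemma exists_unit_orthogonal:
  fixes X :: "'a::euclidean_space set"
  assumes "finite X" "card X < DIM('a)"
  obtains w where "norm w = 1" "\<And>x. x \<in> X \<Longrightarrow> w \<bullet> x = 0"
proof -
  have "dim X < DIM('a)"
    using dim_le_card'[OF assms(1)] assms(2) by linarith
  then obtain z where "z \<noteq> 0" "\<And>v. v \<in> span X \<Longrightarrow> orthogonal z v"
    using orthogonal_to_subspace_exists by blast
  then show ?thesis
    by (intro that[of "z /\<^sub>R norm z"]) (auto simp: orthogonal_def span_base)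
qed

text \<open>
  The contact point \<open>a\<^sub>0\<close> maximises \<open>a \<mapsto> (u \<bullet> a) / (e \<bullet> a)\<close> for a unit \<open>u \<perp> e\<close>; the
  normal is \<open>u - M e\<close> with \<open>M\<close> the maximum, which is nonzero since its inner product with \<open>u\<close> is \<open>1\<close>.
\<close>
lemma exists_supporting_normal:
  fixes A :: "'a::euclidean_space set"
  assumes "DIM('a) \<ge> 2" "compact A" "A \<noteq> {}" "\<And>a. a \<in> A \<Longrightarrow> e \<bullet> a > 0"
  obtains a0 where "a0 \<in> A" "supporting_normals A a0 \<noteq> {}"
proof -
  obtain u where u: "norm u = 1" "u \<bullet> e = 0"
    using exists_unit_orthogonal[of "{e}"] assms(1) by auto
  define r where "r a = (u \<bullet> a) / (e \<bullet> a)" for a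
  have "continuous_on A r"
    unfolding r_def by (intro continuous_intros) (use assms(4) in force)
  then obtain a0 where a0: "a0 \<in> A" "\<And>a. a \<in> A \<Longrightarrow> r a \<le> r a0"
    using continuous_attains_sup[OF assms(2,3)] by blast
  define v where "v = u - r a0 *\<^sub>R e"
  have "v \<bullet> a \<le> 0" if "a \<in> A" for a
    using a0(2)[OF that] assms(4)[OF that]
    by (simp add: r_def v_def inner_diff_left divide_le_eq)
  moreover have "v \<bullet> a0 = 0"
    using assms(4)[OF a0(1)] by (simp add: r_def v_def inner_diff_left)
  moreover have "v \<noteq> 0"
  proof
    assume "v = 0"
    then have "v \<bullet> u = 0" by simp
    moreover have "v \<bullet> u = 1"
      using u inner_commute[of u e] by (simp add: v_def inner_diff_left norm_eq_1)
    ultimately show False by simp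
  qed
  ultimately have "v /\<^sub>R norm v \<in> supporting_normals A a0"
    by (auto simp: supporting_normals_def intro!: mult_nonneg_nonpos)
  with a0(1) show ?thesis
    using that by blast
qed

lemma tilted_supporting_normal_not_supporting:
  fixes A :: "'a::euclidean_space set"
  assumes b: "b \<in> supporting_normals A a0"
    and b_max: "\<And>e. e \<in> supporting_normals A a0 \<Longrightarrow> e \<bullet> c \<le> b \<bullet> c"
    and "b \<bullet> c < 0"
    and p: "norm p = 1" "p \<bullet> a0 = 0" "p \<bullet> b = 0" "p \<bullet> c \<ge> 0"
    and "t > 0"
  shows "\<exists>a1\<in>A. (b + t *\<^sub>R p) \<bullet> a1 > 0"
proof (rule ccontr)
  assume "\<not> ?thesis"
  then have supp: "\<forall>a\<in>A. (b + t *\<^sub>R p) \<bullet> a \<le> 0"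
    by (simp add: not_less)
  define N where "N = norm (b + t *\<^sub>R p)"
  have "b \<bullet> b = 1" "p \<bullet> p = 1"
    using b p(1) by (simp_all add: supporting_normals_def norm_eq_1)
  then have "N\<^sup>2 = 1 + t\<^sup>2"
    using p(3) unfolding N_def power2_norm_eq_inner
    by (simp add: inner_add inner_commute power2_eq_square)
  with \<open>t > 0\<close> have "1\<^sup>2 < N\<^sup>2"
    by simp
  then have "N > 1"
    using power_less_imp_less_base[of 1 2 N] by (simp add: N_def)
  have "(b + t *\<^sub>R p) /\<^sub>R N \<in> supporting_normals A a0"
    using b p(2) supp \<open>N > 1\<close>
    by (auto simp: supporting_normals_def N_def[symmetric] inner_add_left
        intro!: mult_nonneg_nonpos)
  then have "((b + t *\<^sub>R p) /\<^sub>R N) \<bullet> c \<le> b \<bullet> c"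
    by (rule b_max)
  then have "b \<bullet> c + t * (p \<bullet> c) \<le> N * (b \<bullet> c)"
    using \<open>N > 1\<close> by (simp add: inner_add_left field_simps)
  moreover have "N * (b \<bullet> c) < b \<bullet> c"
    using \<open>N > 1\<close> \<open>b \<bullet> c < 0\<close> by (simp add: mult_less_cancel_right1)
  moreover have "t * (p \<bullet> c) \<ge> 0"
    using \<open>t > 0\<close> p(4) by simp
  ultimately show False
    by linarith
qed

lemma exists_supporting_normal_with_near_point:
  fixes A :: "'a::euclidean_space set"
  assumes "DIM('a) \<ge> 3" "supporting_normals A a0 \<noteq> {}" "a \<in> A" "a \<noteq> a0" "t > 0"
  obtains b a1 where "b \<in> supporting_normals A a0" "a1 \<in> A" "b \<bullet> a1 > - t * norm (a1 - a0)"
proof -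
  have "continuous_on (supporting_normals A a0) (\<lambda>e. e \<bullet> a)"
    by (intro continuous_intros)
  then obtain b where b: "b \<in> supporting_normals A a0"
    and b_max: "\<And>e. e \<in> supporting_normals A a0 \<Longrightarrow> e \<bullet> a \<le> b \<bullet> a"
    using continuous_attains_sup[OF compact_supporting_normals assms(2)] by blast
  show ?thesis
  proof (cases "b \<bullet> a > - t * norm (a - a0)")
    case True
    then show ?thesis
      using that b assms(3) by blast
  next
    case False
    moreover have "t * norm (a - a0) > 0"
      using assms(4,5) by simp
    ultimately have "b \<bullet> a < 0"
      by linarith
    have "card {a0, b} < DIM('a)"
      using assms(1) by (simp add: card_insert_if)
    then obtain w where w: "norm w = 1" "w \<bullet> a0 = 0" "w \<bullet> b = 0"
      using exists_unit_orthogonal[of "{a0, b}"] by (metis finite.emptyI finite.insertI insertCI)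
    define p where "p = (if w \<bullet> a \<ge> 0 then w else - w)"
    have p: "norm p = 1" "p \<bullet> a0 = 0" "p \<bullet> b = 0" "p \<bullet> a \<ge> 0"
      using w by (auto simp: p_def)
    obtain a1 where a1: "a1 \<in> A" "(b + t *\<^sub>R p) \<bullet> a1 > 0"
      using tilted_supporting_normal_not_supporting[OF b b_max \<open>b \<bullet> a < 0\<close> p assms(5)] by blast
    have "p \<bullet> a1 \<le> norm (a1 - a0)"
      using norm_cauchy_schwarz[of p "a1 - a0"] p(1,2) by (simp add: inner_diff_right)
    then have "t * (p \<bullet> a1) \<le> t * norm (a1 - a0)"
      using \<open>t > 0\<close> by simp
    moreover have "b \<bullet> a1 + t * (p \<bullet> a1) > 0"
      using a1(2) by (simp add: inner_add_left)
    ultimately have "b \<bullet> a1 > - t * norm (a1 - a0)"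
      by linarith
    with that b a1(1) show ?thesis
      by blast
  qed
qed

theorem lemma2p2:
  fixes A :: "(real ^ 'n) set"
  assumes "CARD('n) \<ge> 3"
    and "closed A"
    and "A \<subseteq> sphere 0 1"
    and "0 < diameter A" and "diameter A \<le> 1"
  shows "\<exists>a0 a1 b. a0 \<in> A \<and> a1 \<in> A \<and> a0 \<noteq> a1 \<and> norm b = 1 \<and>
           b \<bullet> a0 = 0 \<and> (\<forall>a\<in>A. b \<bullet> a \<le> 0) \<and>
           b \<bullet> a1 > - (1/2) * norm (a1 - a0)"
proof -
  have dim: "DIM(real ^ 'n) \<ge> 3"
    using assms(1) by simp
  have unit: "norm a = 1" if "a \<in> A" for a
    using assms(3) that by auto
  have "bounded A"
    using assms(3) bounded_subset bounded_sphere by blast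
  with assms(2) have "compact A"
    by (simp add: compact_eq_bounded_closed)
  have non_singleton: "\<exists>a\<in>A. a \<noteq> x" for x
  proof (rule ccontr)
    assume "\<not> ?thesis"
    then have "diameter A \<le> diameter {x}"
      by (intro diameter_subset) auto
    with assms(4) show False
      by simp
  qed
  then obtain e where "e \<in> A"
    by blast
  have pos: "e \<bullet> a > 0" if "a \<in> A" for a
  proof -
    have "dist e a \<le> 1"
      using diameter_bounded_bound[OF \<open>bounded A\<close> \<open>e \<in> A\<close> that] assms(5) by linarith
    then show ?thesis
      using inner_ge_half_if_dist_le_1[OF unit[OF \<open>e \<in> A\<close>] unit[OF that]] by linarith
  qed
  have "DIM(real ^ 'n) \<ge> 2" "A \<noteq> {}"
    using dim \<open>e \<in> A\<close> by auto
  then obtain a0 where a0: "a0 \<in> A" "supporting_normals A a0 \<noteq> {}"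
    using exists_supporting_normal[OF _ \<open>compact A\<close> _ pos] by blast
  obtain a where "a \<in> A" "a \<noteq> a0"
    using non_singleton by blast
  then obtain b a1 where b: "b \<in> supporting_normals A a0"
      and a1: "a1 \<in> A" "b \<bullet> a1 > - (1/2) * norm (a1 - a0)"
    using exists_supporting_normal_with_near_point[OF dim a0(2), of a "1/2"] by auto
  moreover have "a1 \<noteq> a0"
    using a1(2) b by (auto simp: supporting_normals_def)
  ultimately show ?thesis
    using a0(1) unfolding supporting_normals_def by blast
qed

end
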